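(* The bidual $\mathcal R^{**}$ of Read's space $\mathcal R=(c_0,|||\cdot|||)$ is strictly convex; that is, for all $\bar x,\bar y$ in the unit sphere of $\mathcal R^{**}$ with $\bar x\ne\bar y$ one has $|||\bar x+\bar y|||<2$ (bidual norm).
   Context: Let $c_{00}(\mathbb Q)$ be the set of finitely supported sequences with rational coefficients, and let $(u_n)_{n\in\mathbb N}$ be a sequence in $c_{00}(\mathbb Q)$ which lists every element of $c_{00}(\mathbb Q)$ infinitely many times. Let $(a_n)_{n\in\mathbb N}$ be a strictly increasing sequence of positive integers with $a_n>\max\operatorname{supp} u_n$ and $a_n>\|u_n\|_1$ for every $n$. $(e_n)$ denotes the canonical unit vectors and $\langle x,y\rangle=\sum_n x_ny_n$. Read's norm on $c_0$ is $|||x||| = \|x\|_\infty + \sum_{n} 2^{-a_n^2}|\langle x, u_n - e_{a_n}\rangle|$, and Read's space is $\mathcal R=(c_0,|||\cdot|||)$ (real scalars). A Banach space is strictly convex if its unit sphere contains no nontrivial segment. *)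

theory Defs
  imports "HOL-Analysis.Analysis"
begin

definition c00Q :: "(nat \<Rightarrow> real) set" where
  "c00Q = {v. finite {i. v i \<noteq> 0} \<and> (\<forall>i. v i \<in> \<rat>)}"

definition c0seq :: "(nat \<Rightarrow> real) set" where
  "c0seq = {x. x \<longlonglongrightarrow> 0}"

definition unit_vec :: "nat \<Rightarrow> nat \<Rightarrow> real" where
  "unit_vec k = (\<lambda>i. if i = k then 1 else 0)"

definition seq_inner :: "(nat \<Rightarrow> real) \<Rightarrow> (nat \<Rightarrow> real) \<Rightarrow> real" where
  "seq_inner x y = (\<Sum>i. x i * y i)"

definition sup_norm :: "(nat \<Rightarrow> real) \<Rightarrow> real" where
  "sup_norm x = (SUP i. \<bar>x i\<bar>)"

definition l1_norm :: "(nat \<Rightarrow> real) \<Rightarrow> real" where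
  "l1_norm x = (\<Sum>i. \<bar>x i\<bar>)"

text \<open>Read's norm, for given parameters u (enumeration of c00(Q)) and a.\<close>
definition read_norm :: "(nat \<Rightarrow> nat \<Rightarrow> real) \<Rightarrow> (nat \<Rightarrow> nat) \<Rightarrow> (nat \<Rightarrow> real) \<Rightarrow> real" where
  "read_norm u a x = sup_norm x +
     (\<Sum>n. (1/2) ^ ((a n)^2) * \<bar>seq_inner x (\<lambda>i. u n i - unit_vec (a n) i)\<bar>)"

definition read_dual :: "(nat \<Rightarrow> nat \<Rightarrow> real) \<Rightarrow> (nat \<Rightarrow> nat) \<Rightarrow> ((nat \<Rightarrow> real) \<Rightarrow> real) set" where
  "read_dual u a = {f.
     (\<forall>x\<in>c0seq. \<forall>y\<in>c0seq. f (\<lambda>i. x i + y i) = f x + f y) \<and>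
     (\<forall>x\<in>c0seq. \<forall>c. f (\<lambda>i. c * x i) = c * f x) \<and>
     (\<exists>C. \<forall>x\<in>c0seq. \<bar>f x\<bar> \<le> C * read_norm u a x) \<and>
     (\<forall>x. x \<notin> c0seq \<longrightarrow> f x = 0)}"

definition dual_norm :: "(nat \<Rightarrow> nat \<Rightarrow> real) \<Rightarrow> (nat \<Rightarrow> nat) \<Rightarrow> ((nat \<Rightarrow> real) \<Rightarrow> real) \<Rightarrow> real" where
  "dual_norm u a f = (SUP x\<in>{x\<in>c0seq. read_norm u a x \<le> 1}. \<bar>f x\<bar>)"

definition read_bidual :: "(nat \<Rightarrow> nat \<Rightarrow> real) \<Rightarrow> (nat \<Rightarrow> nat) \<Rightarrow> (((nat \<Rightarrow> real) \<Rightarrow> real) \<Rightarrow> real) set" where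
  "read_bidual u a = {\<Phi>.
     (\<forall>f\<in>read_dual u a. \<forall>g\<in>read_dual u a. \<Phi> (\<lambda>x. f x + g x) = \<Phi> f + \<Phi> g) \<and>
     (\<forall>f\<in>read_dual u a. \<forall>c. \<Phi> (\<lambda>x. c * f x) = c * \<Phi> f) \<and>
     (\<exists>C. \<forall>f\<in>read_dual u a. \<bar>\<Phi> f\<bar> \<le> C * dual_norm u a f)}"

definition bidual_norm :: "(nat \<Rightarrow> nat \<Rightarrow> real) \<Rightarrow> (nat \<Rightarrow> nat) \<Rightarrow> (((nat \<Rightarrow> real) \<Rightarrow> real) \<Rightarrow> real) \<Rightarrow> real" where
  "bidual_norm u a \<Phi> = (SUP f\<in>{f\<in>read_dual u a. dual_norm u a f \<le> 1}. \<bar>\<Phi> f\<bar>)"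

end

theory Submission imports Defs begin

text \<open>
  An element \<Phi> of the bidual is determined by its coordinates \<xi> i = \<Phi> (delta i): the dual of
  Read's space sits inside l1 (Read's norm is at most five times the sup norm), so
  \<Phi> f = lim f (trunc N \<xi>). If the bidual norm of \<Phi> is at most 1, testing trunc N \<xi> against a
  norming functional shows that its Read norm is at most 1 + 8 / 2^N: the weights 2^-(a n)^2
  decay fast enough to make the contribution of the coordinates beyond N negligible.

  For X \<noteq> Y of norm one, the coordinate sequences \<xi> and \<eta> are not nonnegatively
  proportional, so some rational finitely supported y pairs to more than 1 with \<xi> and to less
  than -1 with \<eta>. Since y = u n for some n and all coordinates are bounded by one, \<xi> and \<eta>
  pair with opposite signs against u n - e (a n): the n-th term of Read's norm then loses a fixed
  amount on trunc N \<xi> + trunc N \<eta> for every large N, and in the limit the norm of X + Y stays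
  below 2.
\<close>

definition trunc :: "nat \<Rightarrow> (nat \<Rightarrow> real) \<Rightarrow> nat \<Rightarrow> real" where
  "trunc N x = (\<lambda>i. if i < N then x i else 0)"

definition delta :: "nat \<Rightarrow> (nat \<Rightarrow> real) \<Rightarrow> real" where
  "delta k = (\<lambda>x. if x \<in> c0seq then x k else 0)"

lemma c0seq_trunc: "trunc N x \<in> c0seq"
proof -
  have "eventually (\<lambda>i. trunc N x i = 0) sequentially"
    unfolding eventually_sequentially trunc_def by (rule exI[of _ N]) auto
  then have "trunc N x \<longlonglongrightarrow> 0" by (rule tendsto_eventually)
  then show ?thesis unfolding c0seq_def by simp
qed

lemma c0seq_add: "x \<in> c0seq \<Longrightarrow> y \<in> c0seq \<Longrightarrow> (\<lambda>i. x i + y i) \<in> c0seq"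
  unfolding c0seq_def using tendsto_add[of x 0 sequentially y 0] by simp

lemma c0seq_scale: "x \<in> c0seq \<Longrightarrow> (\<lambda>i. c * x i) \<in> c0seq"
  unfolding c0seq_def using tendsto_mult_right_zero by auto

lemma c0seq_zero: "(\<lambda>i. 0) \<in> c0seq"
  unfolding c0seq_def by simp

lemma c0seq_unit_vec: "unit_vec k \<in> c0seq"
proof -
  have "trunc (Suc k) (unit_vec k) = unit_vec k" unfolding trunc_def unit_vec_def by auto
  then show ?thesis using c0seq_trunc by metis
qed

lemma c0seq_bounded: "x \<in> c0seq \<Longrightarrow> \<exists>B. \<forall>i. \<bar>x i\<bar> \<le> B"
  unfolding c0seq_def using convergentI[THEN convergent_imp_Bseq, of x 0]
  by (auto simp: Bseq_def intro: less_imp_le)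

lemma seq_inner_finite_support:
  assumes "finite F" "\<And>k. k \<notin> F \<Longrightarrow> y k = 0"
  shows "seq_inner x y = (\<Sum>k\<in>F. x k * y k)"
  unfolding seq_inner_def by (rule suminf_finite) (use assms in auto)

lemma seq_inner_two_unit_vecs:
  "seq_inner x (\<lambda>k. q * unit_vec i k + p * unit_vec j k) = q * x i + p * x j"
proof -
  have "seq_inner x (\<lambda>k. q * unit_vec i k + p * unit_vec j k)
      = (\<Sum>k\<in>{i, j}. x k * (q * unit_vec i k + p * unit_vec j k))"
    by (rule seq_inner_finite_support) (auto simp: unit_vec_def)
  then show ?thesis by (cases "i = j") (auto simp: unit_vec_def algebra_simps)
qed

lemma two_unit_vecs_in_c00Q:
  assumes "q \<in> \<rat>" "p \<in> \<rat>"
  shows "(\<lambda>k. q * unit_vec i k + p * unit_vec j k) \<in> c00Q"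
proof -
  have "finite {k. q * unit_vec i k + p * unit_vec j k \<noteq> 0}"
    by (rule finite_subset[of _ "{i, j}"]) (auto simp: unit_vec_def)
  moreover have "q * unit_vec i k + p * unit_vec j k \<in> \<rat>" for k
    using assms by (auto simp: unit_vec_def)
  ultimately show ?thesis unfolding c00Q_def by simp
qed

lemma abs_le_sup_norm: "\<forall>i. \<bar>x i\<bar> \<le> B \<Longrightarrow> \<bar>x k\<bar> \<le> sup_norm x"
  unfolding sup_norm_def by (rule cSUP_upper) (auto intro!: bdd_aboveI2)

lemma sup_norm_le: "\<forall>i. \<bar>x i\<bar> \<le> B \<Longrightarrow> sup_norm x \<le> B"
  unfolding sup_norm_def by (rule cSUP_least) auto

lemma Suc_mult_power2_le_power2_square:
  fixes A N n :: nat
  assumes "A \<ge> N" "A \<ge> n + 1"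
  shows "(A + 1) * 2 ^ (N + n) \<le> 2 * 2 ^ (A\<^sup>2)"
proof -
  have "N + n + A \<le> A\<^sup>2 + 1"
  proof (cases "A \<le> 1")
    case True
    then have "A = 1" using assms by simp
    then show ?thesis using assms by (simp add: power2_eq_square)
  next
    case False
    then have "A * A \<ge> 3 * A - 2" by (cases A) (auto simp: algebra_simps)
    then show ?thesis using assms by (auto simp: power2_eq_square)
  qed
  then have "(2::nat) ^ (A + (N + n)) \<le> 2 ^ (A\<^sup>2 + 1)"
    by (intro power_increasing) auto
  then have "2 ^ A * 2 ^ (N + n) \<le> (2::nat) * 2 ^ (A\<^sup>2)"
    by (simp add: power_add)
  moreover have "A + 1 \<le> 2 ^ A" using less_exp[of A] by (simp add: Suc_le_eq)
  ultimately show ?thesis using mult_le_mono1 order_trans by blast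
qed

lemma geometric_tail_sums: "(\<lambda>n. c * (1/2::real) ^ (N + n)) sums (2 * c * (1/2) ^ N)"
proof -
  have "(\<lambda>n. (c * (1/2) ^ N) * (1/2::real) ^ n) sums ((c * (1/2) ^ N) * 2)"
    using sums_mult[OF geometric_sums[of "1/2::real"]] by simp
  then show ?thesis by (simp add: power_add algebra_simps)
qed

lemma exists_c00Q_separating_independent:
  fixes \<xi> \<eta> :: "nat \<Rightarrow> real"
  assumes ij: "\<xi> i * \<eta> j \<noteq> \<xi> j * \<eta> i"
  shows "\<exists>y\<in>c00Q. seq_inner \<xi> y > 1 \<and> seq_inner \<eta> y < -1"
proof -
  \<comment> \<open>Solve the 2x2 system for the values 2 and -2 exactly, then round to rationals.\<close>
  define det where "det = \<xi> i * \<eta> j - \<xi> j * \<eta> i"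
  have det: "det \<noteq> 0" using ij unfolding det_def by simp
  define x0 where "x0 = 2 * (\<eta> j + \<xi> j) / det"
  define y0 where "y0 = - 2 * (\<eta> i + \<xi> i) / det"
  have exact: "\<xi> i * x0 + \<xi> j * y0 = 2" "\<eta> i * x0 + \<eta> j * y0 = -2"
    unfolding x0_def y0_def using det by (simp_all add: field_simps) (simp_all add: det_def algebra_simps)
  define K where "K = \<bar>\<xi> i\<bar> + \<bar>\<xi> j\<bar> + \<bar>\<eta> i\<bar> + \<bar>\<eta> j\<bar> + 1"
  have K: "K > 0" unfolding K_def by simp
  define d where "d = 1 / (2 * K)"
  have d: "d > 0" "K * d = 1/2" unfolding d_def using K by simp_all
  obtain q where q: "q \<in> \<rat>" "\<bar>q - x0\<bar> < d"
    using Rats_dense_in_real[of "x0 - d" "x0 + d"] d by (auto simp: abs_less_iff)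
  obtain p where p: "p \<in> \<rat>" "\<bar>p - y0\<bar> < d"
    using Rats_dense_in_real[of "y0 - d" "y0 + d"] d by (auto simp: abs_less_iff)
  have perturb: "\<bar>z i * (q - x0) + z j * (p - y0)\<bar> \<le> 1/2"
    if "\<bar>z i\<bar> + \<bar>z j\<bar> \<le> K" for z :: "nat \<Rightarrow> real"
  proof -
    have "\<bar>z i * (q - x0)\<bar> \<le> \<bar>z i\<bar> * d" "\<bar>z j * (p - y0)\<bar> \<le> \<bar>z j\<bar> * d"
      using p q by (simp_all add: abs_mult mult_left_mono)
    then have "\<bar>z i * (q - x0) + z j * (p - y0)\<bar> \<le> \<bar>z i\<bar> * d + \<bar>z j\<bar> * d"
      by (intro order_trans[OF abs_triangle_ineq add_mono])
    also have "\<dots> \<le> K * d" using that d by (simp add: distrib_right[symmetric] mult_right_mono)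
    finally show ?thesis using d by simp
  qed
  have "\<bar>\<xi> i\<bar> + \<bar>\<xi> j\<bar> \<le> K" "\<bar>\<eta> i\<bar> + \<bar>\<eta> j\<bar> \<le> K" unfolding K_def by simp_all
  note small = this[THEN perturb, unfolded abs_le_iff]
  have "q * \<xi> i + p * \<xi> j = 2 + (\<xi> i * (q - x0) + \<xi> j * (p - y0))"
    "q * \<eta> i + p * \<eta> j = -2 + (\<eta> i * (q - x0) + \<eta> j * (p - y0))"
    using exact by (simp_all add: algebra_simps)
  with small have "q * \<xi> i + p * \<xi> j > 1" "q * \<eta> i + p * \<eta> j < -1"
    by linarith+
  then show ?thesis
    by (intro bexI[OF _ two_unit_vecs_in_c00Q[OF q(1) p(1), of i j]])
      (simp only: seq_inner_two_unit_vecs)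
qed

lemma exists_c00Q_separating_antiproportional:
  fixes \<xi> \<eta> :: "nat \<Rightarrow> real"
  assumes i: "\<xi> i \<noteq> 0" and c: "c < 0" and \<eta>: "\<eta> i = c * \<xi> i"
  shows "\<exists>y\<in>c00Q. seq_inner \<xi> y > 1 \<and> seq_inner \<eta> y < -1"
proof -
  \<comment> \<open>\<open>1 - 1 / c\<close> exceeds both 1 and \<open>-1 / c\<close>.\<close>
  have "\<exists>q\<in>\<rat>. q * \<xi> i > 1 - 1 / c"
  proof (cases "\<xi> i > 0")
    case True
    obtain q where "q \<in> \<rat>" "(1 - 1 / c) / \<xi> i < q"
      using Rats_dense_in_real[of "(1 - 1 / c) / \<xi> i" "(1 - 1 / c) / \<xi> i + 1"] by auto
    then show ?thesis using True by (auto simp: field_simps)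
  next
    case False
    then have neg: "\<xi> i < 0" using i by simp
    obtain q where "q \<in> \<rat>" "q < (1 - 1 / c) / \<xi> i"
      using Rats_dense_in_real[of "(1 - 1 / c) / \<xi> i - 1" "(1 - 1 / c) / \<xi> i"] by auto
    then show ?thesis using neg by (auto simp: field_simps)
  qed
  then obtain q where q: "q \<in> \<rat>" "q * \<xi> i > 1 - 1 / c" by blast
  have "1 - 1 / c > 1" using c by simp
  then have "q * \<xi> i > 1" using q(2) by linarith
  have "c * (q * \<xi> i) < c * (1 - 1 / c)" using q c by simp
  then have "q * \<eta> i < c - 1" using c \<eta> by (simp add: algebra_simps)
  with \<open>q * \<xi> i > 1\<close> c have "q * \<xi> i + 0 * \<xi> i > 1" "q * \<eta> i + 0 * \<eta> i < -1"
    by simp_all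
  then show ?thesis
    by (intro bexI[OF _ two_unit_vecs_in_c00Q[OF q(1) Rats_0, of i i]])
      (simp only: seq_inner_two_unit_vecs)
qed

lemma exists_c00Q_separating:
  fixes \<xi> \<eta> :: "nat \<Rightarrow> real"
  assumes nonzero: "\<exists>i. \<xi> i \<noteq> 0" and not_prop: "\<not> (\<exists>c\<ge>0. \<forall>i. \<eta> i = c * \<xi> i)"
  shows "\<exists>y\<in>c00Q. seq_inner \<xi> y > 1 \<and> seq_inner \<eta> y < -1"
proof (cases "\<exists>i j. \<xi> i * \<eta> j \<noteq> \<xi> j * \<eta> i")
  case True
  then show ?thesis using exists_c00Q_separating_independent by blast
next
  case False
  obtain i where i: "\<xi> i \<noteq> 0" using nonzero by blast
  define c where "c = \<eta> i / \<xi> i"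
  have prop_eq: "\<eta> k = c * \<xi> k" for k
  proof -
    have "\<xi> i * \<eta> k = \<xi> k * \<eta> i" using False by blast
    then show ?thesis using i unfolding c_def by (simp add: field_simps)
  qed
  have "c < 0"
  proof (rule ccontr)
    assume "\<not> c < 0"
    with prop_eq have "\<exists>c\<ge>0. \<forall>i. \<eta> i = c * \<xi> i" by (intro exI[of _ c]) simp
    with not_prop show False ..
  qed
  then show ?thesis using exists_c00Q_separating_antiproportional[of \<xi> i c \<eta>] i prop_eq by blast
qed

locale read_space =
  fixes u :: "nat \<Rightarrow> nat \<Rightarrow> real" and a :: "nat \<Rightarrow> nat"
  assumes a_mono: "strict_mono a" and a_pos: "\<And>n. a n > 0"
    and a_supp: "\<And>n i. u n i \<noteq> 0 \<Longrightarrow> i < a n"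
    and a_l1: "\<And>n. l1_norm (u n) < real (a n)"
begin

definition w :: "nat \<Rightarrow> real" where "w n = (1/2) ^ ((a n)\<^sup>2)"
definition v :: "nat \<Rightarrow> nat \<Rightarrow> real" where "v n = (\<lambda>i. u n i - unit_vec (a n) i)"

abbreviation "RN \<equiv> read_norm u a"
abbreviation "D \<equiv> read_dual u a"
abbreviation "DN \<equiv> dual_norm u a"
abbreviation "BD \<equiv> read_bidual u a"
abbreviation "BN \<equiv> bidual_norm u a"

lemma w_pos: "w n > 0"
  unfolding w_def by simp

lemma read_norm_eq: "RN x = sup_norm x + (\<Sum>n. w n * \<bar>seq_inner x (v n)\<bar>)"
  unfolding read_norm_def w_def v_def by simp

lemma a_ge_Suc: "a n \<ge> n + 1"
proof (induction n)
  case 0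
  then show ?case using a_pos[of 0] by simp
next
  case (Suc n)
  have "a n < a (Suc n)" using a_mono by (simp add: strict_mono_def)
  then show ?case using Suc by simp
qed

lemma u_eq_0: "a n \<le> i \<Longrightarrow> u n i = 0"
  using a_supp leD by blast

lemma seq_inner_v_eq_sum: "seq_inner x (v n) = (\<Sum>k\<le>a n. x k * v n k)"
  by (rule seq_inner_finite_support) (auto simp: v_def unit_vec_def u_eq_0)

lemma seq_inner_v: "seq_inner x (v n) = seq_inner x (u n) - x (a n)"
proof -
  have "seq_inner x (u n) = (\<Sum>k\<le>a n. x k * u n k)"
    by (rule seq_inner_finite_support) (auto simp: u_eq_0)
  moreover have "(\<Sum>k\<le>a n. x k * unit_vec (a n) k) = x (a n)"
    by (simp add: unit_vec_def if_distrib[of "\<lambda>t. x _ * t"] cong: if_cong)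
  ultimately show ?thesis
    unfolding seq_inner_v_eq_sum by (simp add: v_def algebra_simps sum_subtractf)
qed

lemma seq_inner_v_add: "seq_inner (\<lambda>i. x i + y i) (v n) = seq_inner x (v n) + seq_inner y (v n)"
  unfolding seq_inner_v_eq_sum by (simp add: algebra_simps sum.distrib)

lemma seq_inner_v_scale: "seq_inner (\<lambda>i. c * x i) (v n) = c * seq_inner x (v n)"
  unfolding seq_inner_v_eq_sum by (simp add: algebra_simps sum_distrib_left)

lemma seq_inner_v_cong:
  "(\<And>i. i < N \<Longrightarrow> x i = y i) \<Longrightarrow> a n < N \<Longrightarrow> seq_inner x (v n) = seq_inner y (v n)"
  unfolding seq_inner_v_eq_sum by (intro sum.cong) auto

lemma sum_abs_v_le: "(\<Sum>k\<le>a n. \<bar>v n k\<bar>) \<le> real (a n) + 1"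
proof -
  have "l1_norm (u n) = (\<Sum>k\<le>a n. \<bar>u n k\<bar>)"
    unfolding l1_norm_def by (rule suminf_finite) (auto simp: u_eq_0)
  then have "(\<Sum>k\<le>a n. \<bar>u n k\<bar>) \<le> real (a n)" using a_l1[of n] by simp
  moreover have "(\<Sum>k\<le>a n. \<bar>v n k\<bar>) \<le> (\<Sum>k\<le>a n. \<bar>u n k\<bar> + \<bar>unit_vec (a n) k\<bar>)"
    unfolding v_def by (rule sum_mono) simp
  moreover have "(\<Sum>k\<le>a n. \<bar>unit_vec (a n) k\<bar>) = 1"
    by (simp add: unit_vec_def)
  ultimately show ?thesis by (simp add: sum.distrib)
qed

lemma abs_seq_inner_v_le:
  assumes "\<forall>i. \<bar>x i\<bar> \<le> B"
  shows "\<bar>seq_inner x (v n)\<bar> \<le> B * (real (a n) + 1)"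
proof -
  have "B \<ge> 0" using assms by (meson abs_ge_zero order_trans)
  have "\<bar>seq_inner x (v n)\<bar> \<le> (\<Sum>k\<le>a n. \<bar>x k * v n k\<bar>)"
    unfolding seq_inner_v_eq_sum by (rule sum_abs)
  also have "\<dots> \<le> (\<Sum>k\<le>a n. B * \<bar>v n k\<bar>)"
    by (rule sum_mono) (simp add: abs_mult assms mult_right_mono)
  also have "\<dots> \<le> B * (real (a n) + 1)"
    using sum_abs_v_le \<open>B \<ge> 0\<close> by (simp add: sum_distrib_left[symmetric] mult_left_mono)
  finally show ?thesis .
qed

lemma w_mult_le: "a n \<ge> N \<Longrightarrow> w n * (real (a n) + 1) \<le> 2 * (1/2) ^ (N + n)"
  using Suc_mult_power2_le_power2_square[of N "a n" n] a_ge_Suc[of n]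
  unfolding w_def of_nat_le_iff[where 'a=real, symmetric]
  by (simp add: power_one_over field_simps)

lemma weighted_term_le:
  assumes "\<forall>i. \<bar>x i\<bar> \<le> B" "a n \<ge> N"
  shows "w n * \<bar>seq_inner x (v n)\<bar> \<le> 2 * B * (1/2) ^ (N + n)"
proof -
  have "B \<ge> 0" using assms by (meson abs_ge_zero order_trans)
  have "w n * \<bar>seq_inner x (v n)\<bar> \<le> w n * (B * (real (a n) + 1))"
    using w_pos[of n] abs_seq_inner_v_le[OF assms(1)] by (simp add: mult_left_mono)
  also have "\<dots> \<le> B * (2 * (1/2) ^ (N + n))"
    using w_mult_le[OF assms(2)] \<open>B \<ge> 0\<close> by (simp add: mult_left_mono mult.left_commute)
  finally show ?thesis by simp
qed

lemma summable_weighted_abs_inner: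
  assumes "\<forall>i. \<bar>x i\<bar> \<le> B"
  shows "summable (\<lambda>n. w n * \<bar>seq_inner x (v n)\<bar>)"
proof (rule summable_comparison_test'[where N=0])
  show "summable (\<lambda>n. 2 * B * (1/2::real) ^ (0 + n))"
    by (rule sums_summable[OF geometric_tail_sums])
  show "norm (w n * \<bar>seq_inner x (v n)\<bar>) \<le> 2 * B * (1/2) ^ (0 + n)" for n
    using weighted_term_le[OF assms, of 0 n] w_pos[of n] by simp
qed

lemma weighted_abs_inner_le:
  assumes "\<forall>i. \<bar>x i\<bar> \<le> B"
  shows "(\<Sum>n. w n * \<bar>seq_inner x (v n)\<bar>) \<le> 4 * B"
proof -
  have "(\<Sum>n. w n * \<bar>seq_inner x (v n)\<bar>) \<le> (\<Sum>n. 2 * B * (1/2) ^ (0 + n))"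
    by (rule suminf_le[OF _ summable_weighted_abs_inner[OF assms]
          sums_summable[OF geometric_tail_sums]]) (use weighted_term_le[OF assms, of 0] in auto)
  also have "\<dots> = 4 * B" using sums_unique[OF geometric_tail_sums[of "2 * B" 0]] by simp
  finally show ?thesis .
qed

lemma abs_le_read_norm:
  assumes "\<forall>i. \<bar>x i\<bar> \<le> B"
  shows "\<bar>x k\<bar> \<le> RN x"
proof -
  have "0 \<le> (\<Sum>n. w n * \<bar>seq_inner x (v n)\<bar>)"
    by (rule suminf_nonneg[OF summable_weighted_abs_inner[OF assms]]) (simp add: w_pos less_imp_le)
  then show ?thesis unfolding read_norm_eq using abs_le_sup_norm[OF assms, of k] by simp
qed

lemma read_norm_nonneg: "\<forall>i. \<bar>x i\<bar> \<le> B \<Longrightarrow> 0 \<le> RN x"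
  using abs_le_read_norm[of x B 0] by simp

lemma read_norm_le: "\<forall>i. \<bar>x i\<bar> \<le> B \<Longrightarrow> RN x \<le> 5 * B"
  unfolding read_norm_eq using sup_norm_le[of x B] weighted_abs_inner_le[of x B] by simp

lemma read_norm_zero: "RN (\<lambda>i. 0) = 0"
  using read_norm_le[of "\<lambda>i. 0" 0] read_norm_nonneg[of "\<lambda>i. 0" 0] by simp

lemma abs_le_read_norm_c0: "x \<in> c0seq \<Longrightarrow> \<bar>x k\<bar> \<le> RN x"
  using c0seq_bounded abs_le_read_norm by blast

lemma read_norm_nonneg_c0: "x \<in> c0seq \<Longrightarrow> 0 \<le> RN x"
  using abs_le_read_norm_c0[of x 0] by simp

lemma read_norm_scale_le:
  assumes "\<forall>i. \<bar>x i\<bar> \<le> B"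
  shows "RN (\<lambda>i. c * x i) \<le> \<bar>c\<bar> * RN x"
proof -
  have "sup_norm (\<lambda>i. c * x i) \<le> \<bar>c\<bar> * sup_norm x"
    unfolding sup_norm_def[of "\<lambda>i. c * x i"]
    by (rule cSUP_least) (auto simp: abs_mult intro!: mult_left_mono abs_le_sup_norm[OF assms])
  moreover have "(\<Sum>n. w n * \<bar>seq_inner (\<lambda>i. c * x i) (v n)\<bar>)
      = \<bar>c\<bar> * (\<Sum>n. w n * \<bar>seq_inner x (v n)\<bar>)"
    unfolding seq_inner_v_scale using suminf_mult[OF summable_weighted_abs_inner[OF assms], of "\<bar>c\<bar>"]
    by (simp add: abs_mult algebra_simps)
  ultimately show ?thesis unfolding read_norm_eq by (simp add: algebra_simps)
qed

lemma read_norm_add_le_gap: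
  assumes x: "\<forall>i. \<bar>x i\<bar> \<le> B1" and y: "\<forall>i. \<bar>y i\<bar> \<le> B2"
    and pos: "seq_inner x (v n0) > 0" and neg: "seq_inner y (v n0) < 0"
  shows "RN (\<lambda>i. x i + y i)
    \<le> RN x + RN y - 2 * w n0 * min (seq_inner x (v n0)) (- seq_inner y (v n0))"
proof -
  define m where "m = min (seq_inner x (v n0)) (- seq_inner y (v n0))"
  define G where "G = (\<lambda>n. if n = n0 then 2 * w n0 * m else 0)"
  have G: "G sums (2 * w n0 * m)" unfolding G_def by (rule sums_single)
  have xy: "\<forall>i. \<bar>x i + y i\<bar> \<le> B1 + B2" using x y by (simp add: abs_triangle_ineq[THEN order_trans] add_mono)
  have sup: "sup_norm (\<lambda>i. x i + y i) \<le> sup_norm x + sup_norm y"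
    by (rule sup_norm_le) (use abs_le_sup_norm[OF x] abs_le_sup_norm[OF y] in \<open>auto intro: abs_triangle_ineq[THEN order_trans] add_mono\<close>)
  note sx = summable_weighted_abs_inner[OF x] and sy = summable_weighted_abs_inner[OF y]
  have "(\<Sum>n. w n * \<bar>seq_inner (\<lambda>i. x i + y i) (v n)\<bar>)
      \<le> (\<Sum>n. w n * \<bar>seq_inner x (v n)\<bar> + w n * \<bar>seq_inner y (v n)\<bar> - G n)"
  proof (rule suminf_le[OF _ summable_weighted_abs_inner[OF xy]])
    show "summable (\<lambda>n. w n * \<bar>seq_inner x (v n)\<bar> + w n * \<bar>seq_inner y (v n)\<bar> - G n)"
      by (intro summable_diff summable_add sx sy sums_summable[OF G])
    fix n
    have "\<bar>seq_inner x (v n) + seq_inner y (v n)\<bar>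
        \<le> \<bar>seq_inner x (v n)\<bar> + \<bar>seq_inner y (v n)\<bar> - (if n = n0 then 2 * m else 0)"
      using pos neg unfolding m_def by (cases "n = n0") (auto simp: min_def)
    then have "w n * \<bar>seq_inner x (v n) + seq_inner y (v n)\<bar>
        \<le> w n * (\<bar>seq_inner x (v n)\<bar> + \<bar>seq_inner y (v n)\<bar> - (if n = n0 then 2 * m else 0))"
      using w_pos[of n] by (simp add: mult_left_mono)
    then show "w n * \<bar>seq_inner (\<lambda>i. x i + y i) (v n)\<bar>
        \<le> w n * \<bar>seq_inner x (v n)\<bar> + w n * \<bar>seq_inner y (v n)\<bar> - G n"
      unfolding seq_inner_v_add G_def by (auto simp: algebra_simps)
  qed
  also have "\<dots> = (\<Sum>n. w n * \<bar>seq_inner x (v n)\<bar>) + (\<Sum>n. w n * \<bar>seq_inner y (v n)\<bar>) - 2 * w n0 * m"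
    using suminf_diff[OF summable_add[OF sx sy] sums_summable[OF G]] suminf_add[OF sx sy]
      sums_unique[OF G] by simp
  finally show ?thesis using sup unfolding read_norm_eq m_def by simp
qed

lemma dual_add: "f \<in> D \<Longrightarrow> x \<in> c0seq \<Longrightarrow> y \<in> c0seq \<Longrightarrow> f (\<lambda>i. x i + y i) = f x + f y"
  unfolding read_dual_def by blast

lemma dual_scale: "f \<in> D \<Longrightarrow> x \<in> c0seq \<Longrightarrow> f (\<lambda>i. c * x i) = c * f x"
  unfolding read_dual_def by blast

lemma dual_eq_0_outside: "f \<in> D \<Longrightarrow> x \<notin> c0seq \<Longrightarrow> f x = 0"
  unfolding read_dual_def by blast

lemma dual_zero: "f \<in> D \<Longrightarrow> f (\<lambda>i. 0) = 0"
  using dual_scale[OF _ c0seq_zero, of f 0] by simp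

lemma dual_bounded:
  assumes "f \<in> D"
  obtains C where "C \<ge> 0" "\<And>x. x \<in> c0seq \<Longrightarrow> \<bar>f x\<bar> \<le> C * RN x"
proof -
  obtain C where C: "\<forall>x\<in>c0seq. \<bar>f x\<bar> \<le> C * RN x"
    using assms unfolding read_dual_def by blast
  have "\<bar>f x\<bar> \<le> max C 0 * RN x" if "x \<in> c0seq" for x
  proof -
    have "C * RN x \<le> max C 0 * RN x" using read_norm_nonneg_c0[OF that] by (simp add: mult_right_mono)
    then show ?thesis using C that by fastforce
  qed
  then show ?thesis using that[of "max C 0"] by simp
qed

lemma dual_lincomb:
  assumes f: "f \<in> D" and g: "g \<in> D"
  shows "(\<lambda>x. f x + c * g x) \<in> D"
proof -
  obtain C1 where C1: "C1 \<ge> 0" "\<And>x. x \<in> c0seq \<Longrightarrow> \<bar>f x\<bar> \<le> C1 * RN x"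
    using dual_bounded[OF f] by blast
  obtain C2 where C2: "C2 \<ge> 0" "\<And>x. x \<in> c0seq \<Longrightarrow> \<bar>g x\<bar> \<le> C2 * RN x"
    using dual_bounded[OF g] by blast
  have "\<bar>f x + c * g x\<bar> \<le> (C1 + \<bar>c\<bar> * C2) * RN x" if x: "x \<in> c0seq" for x
  proof -
    have "\<bar>f x + c * g x\<bar> \<le> \<bar>f x\<bar> + \<bar>c\<bar> * \<bar>g x\<bar>"
      by (simp add: abs_mult abs_triangle_ineq[THEN order_trans])
    also have "\<dots> \<le> C1 * RN x + \<bar>c\<bar> * (C2 * RN x)"
      using C1 C2 x by (intro add_mono mult_left_mono) auto
    finally show ?thesis by (simp add: algebra_simps)
  qed
  then have bound: "\<exists>C. \<forall>x\<in>c0seq. \<bar>f x + c * g x\<bar> \<le> C * RN x" by blast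
  have "\<forall>x\<in>c0seq. \<forall>y\<in>c0seq.
      f (\<lambda>i. x i + y i) + c * g (\<lambda>i. x i + y i) = (f x + c * g x) + (f y + c * g y)"
    "\<forall>x\<in>c0seq. \<forall>d. f (\<lambda>i. d * x i) + c * g (\<lambda>i. d * x i) = d * (f x + c * g x)"
    "\<forall>x. x \<notin> c0seq \<longrightarrow> f x + c * g x = 0"
    using f g by (simp_all add: dual_add dual_scale dual_eq_0_outside algebra_simps)
  with bound show ?thesis unfolding read_dual_def mem_Collect_eq by blast
qed

lemma zero_in_dual: "(\<lambda>x. 0) \<in> D"
  unfolding read_dual_def by (auto intro: exI[of _ 0])

lemma scale_in_dual: "f \<in> D \<Longrightarrow> (\<lambda>x. c * f x) \<in> D"
  using dual_lincomb[OF zero_in_dual, of f c] by simp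

lemma delta_in_dual: "delta k \<in> D"
proof -
  have "\<forall>x\<in>c0seq. \<bar>delta k x\<bar> \<le> 1 * RN x"
    using abs_le_read_norm_c0 unfolding delta_def by auto
  then show ?thesis unfolding read_dual_def delta_def
    by (auto simp: c0seq_add c0seq_scale intro!: exI[of _ 1])
qed

lemma bdd_above_dual: "f \<in> D \<Longrightarrow> bdd_above ((\<lambda>x. \<bar>f x\<bar>) ` {x\<in>c0seq. RN x \<le> 1})"
  by (erule dual_bounded, rule bdd_aboveI2) (auto intro: order_trans mult_left_le)

lemma abs_le_dual_norm: "f \<in> D \<Longrightarrow> x \<in> c0seq \<Longrightarrow> RN x \<le> 1 \<Longrightarrow> \<bar>f x\<bar> \<le> DN f"
  unfolding dual_norm_def by (rule cSUP_upper[OF _ bdd_above_dual]) auto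

lemma dual_norm_nonneg: "f \<in> D \<Longrightarrow> 0 \<le> DN f"
  using abs_le_dual_norm[OF _ c0seq_zero, of f] read_norm_zero by simp

lemma dual_norm_le:
  assumes "\<And>x. x \<in> c0seq \<Longrightarrow> RN x \<le> 1 \<Longrightarrow> \<bar>f x\<bar> \<le> K"
  shows "DN f \<le> K"
  unfolding dual_norm_def
  by (rule cSUP_least) (use assms c0seq_zero read_norm_zero in auto)

lemma dual_norm_delta_le: "DN (delta k) \<le> 1"
  by (rule dual_norm_le) (auto simp: delta_def intro: abs_le_read_norm_c0[THEN order_trans])

lemma abs_dual_le:
  assumes f: "f \<in> D" and x: "x \<in> c0seq"
  shows "\<bar>f x\<bar> \<le> DN f * RN x"
proof (cases "RN x = 0")
  case True
  then have "x = (\<lambda>i. 0)" using abs_le_read_norm_c0[OF x] by (auto simp: fun_eq_iff)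
  then show ?thesis using dual_zero[OF f] True by simp
next
  case False
  then have r: "RN x > 0" using read_norm_nonneg_c0[OF x] by simp
  obtain B where "\<forall>i. \<bar>x i\<bar> \<le> B" using c0seq_bounded[OF x] by blast
  then have "RN (\<lambda>i. (1 / RN x) * x i) \<le> 1"
    using read_norm_scale_le[of x B "1 / RN x"] r by simp
  then have "\<bar>f (\<lambda>i. (1 / RN x) * x i)\<bar> \<le> DN f"
    by (rule abs_le_dual_norm[OF f c0seq_scale[OF x]])
  then have "\<bar>f x\<bar> / RN x \<le> DN f"
    unfolding dual_scale[OF f x] using r by (simp add: abs_mult)
  then show ?thesis using r by (simp add: field_simps)
qed

lemma dual_trunc: "f \<in> D \<Longrightarrow> f (trunc N x) = (\<Sum>i<N. x i * f (unit_vec i))"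
proof (induction N)
  case 0
  have "trunc 0 x = (\<lambda>i. 0)" unfolding trunc_def by simp
  then show ?case using dual_zero[OF 0] by simp
next
  case (Suc N)
  have "trunc (Suc N) x = (\<lambda>i. trunc N x i + x N * unit_vec N i)"
    unfolding trunc_def unit_vec_def by (auto simp: less_Suc_eq)
  then show ?case
    using Suc dual_add[OF Suc.prems c0seq_trunc c0seq_scale[OF c0seq_unit_vec]]
      dual_scale[OF Suc.prems c0seq_unit_vec] by simp
qed

lemma summable_abs_dual_unit_vec:
  assumes f: "f \<in> D"
  shows "summable (\<lambda>i. \<bar>f (unit_vec i)\<bar>)"
proof -
  obtain C where C: "C \<ge> 0" "\<And>x. x \<in> c0seq \<Longrightarrow> \<bar>f x\<bar> \<le> C * RN x"
    using dual_bounded[OF f] by blast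
  show ?thesis
  proof (rule summableI_nonneg_bounded)
    fix N
    define s where "s = (\<lambda>i. sgn (f (unit_vec i)))"
    have s: "\<forall>i. \<bar>trunc N s i\<bar> \<le> 1" unfolding trunc_def s_def by (simp add: abs_sgn_eq)
    have "(\<Sum>i<N. \<bar>f (unit_vec i)\<bar>) = f (trunc N s)"
      unfolding dual_trunc[OF f] s_def by (simp add: abs_sgn mult.commute)
    also have "\<dots> \<le> C * RN (trunc N s)" using C(2)[OF c0seq_trunc, of N s] by simp
    also have "\<dots> \<le> C * 5" using read_norm_le[OF s] C(1) by (simp add: mult_left_mono)
    finally show "(\<Sum>i<N. \<bar>f (unit_vec i)\<bar>) \<le> C * 5" .
  qed simp
qed

lemma dual_trunc_tendsto:
  assumes f: "f \<in> D" and x: "x \<in> c0seq"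
  shows "(\<lambda>M. f (trunc M x)) \<longlonglongrightarrow> f x"
proof (rule LIMSEQ_I)
  fix r :: real assume r: "r > 0"
  obtain C where C: "C \<ge> 0" "\<And>x. x \<in> c0seq \<Longrightarrow> \<bar>f x\<bar> \<le> C * RN x"
    using dual_bounded[OF f] by blast
  define e where "e = r / (5 * (C + 1))"
  have e: "e > 0" unfolding e_def using r C by simp
  obtain M0 where M0: "\<forall>i\<ge>M0. \<bar>x i\<bar> < e"
    using LIMSEQ_D[of x 0 e] x e unfolding c0seq_def by auto
  have "\<bar>f (trunc M x) - f x\<bar> < r" if M: "M \<ge> M0" for M
  proof -
    define t where "t = (\<lambda>i. x i + (-1) * trunc M x i)"
    have t: "t \<in> c0seq" unfolding t_def by (rule c0seq_add[OF x c0seq_scale[OF c0seq_trunc]])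
    have "x = (\<lambda>i. trunc M x i + t i)" unfolding t_def by simp
    then have "f x = f (trunc M x) + f t" using dual_add[OF f c0seq_trunc t] by metis
    then have "\<bar>f (trunc M x) - f x\<bar> = \<bar>f t\<bar>" by simp
    also have "\<dots> \<le> C * RN t" using C(2)[OF t] .
    also have "\<dots> \<le> C * (5 * e)"
    proof -
      have "\<forall>i. \<bar>t i\<bar> \<le> e" unfolding t_def trunc_def using M0 M e by (auto simp: less_imp_le)
      then show ?thesis using C(1) read_norm_le by (simp add: mult_left_mono)
    qed
    also have "\<dots> < r" unfolding e_def using r C(1) by (simp add: field_simps)
    finally show ?thesis .
  qed
  then show "\<exists>M0. \<forall>M\<ge>M0. norm (f (trunc M x) - f x) < r" by auto
qed

definition dual_tail :: "((nat \<Rightarrow> real) \<Rightarrow> real) \<Rightarrow> nat \<Rightarrow> real" where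
  "dual_tail f N = (\<Sum>i. \<bar>f (unit_vec i)\<bar>) - (\<Sum>i<N. \<bar>f (unit_vec i)\<bar>)"

lemma dual_tail_tendsto_0: "f \<in> D \<Longrightarrow> dual_tail f \<longlonglongrightarrow> 0"
  unfolding dual_tail_def
  using tendsto_diff[OF tendsto_const summable_LIMSEQ[OF summable_abs_dual_unit_vec],
      of f "\<Sum>i. \<bar>f (unit_vec i)\<bar>"] by simp

lemma abs_dual_sub_partial_le:
  assumes f: "f \<in> D" and x: "x \<in> c0seq" "\<forall>i. \<bar>x i\<bar> \<le> 1"
  shows "\<bar>f x - (\<Sum>i<N. x i * f (unit_vec i))\<bar> \<le> dual_tail f N"
proof (rule LIMSEQ_le_const2)
  show "(\<lambda>M. \<bar>f (trunc M x) - (\<Sum>i<N. x i * f (unit_vec i))\<bar>)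
      \<longlonglongrightarrow> \<bar>f x - (\<Sum>i<N. x i * f (unit_vec i))\<bar>"
    by (intro tendsto_rabs tendsto_diff tendsto_const dual_trunc_tendsto f x)
  show "\<exists>M0. \<forall>M\<ge>M0. \<bar>f (trunc M x) - (\<Sum>i<N. x i * f (unit_vec i))\<bar> \<le> dual_tail f N"
  proof (intro exI allI impI)
    fix M assume M: "N \<le> M"
    have split: "{..<M} = {..<N} \<union> {N..<M}" "{..<N} \<inter> {N..<M} = {}" using M by auto
    have "\<bar>f (trunc M x) - (\<Sum>i<N. x i * f (unit_vec i))\<bar> = \<bar>\<Sum>i=N..<M. x i * f (unit_vec i)\<bar>"
      unfolding dual_trunc[OF f] split(1) by (simp add: sum.union_disjoint split(2))
    also have "\<dots> \<le> (\<Sum>i=N..<M. \<bar>f (unit_vec i)\<bar>)"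
      by (rule order_trans[OF sum_abs sum_mono])
        (use x(2) in \<open>auto simp: abs_mult intro: mult_left_le_one_le\<close>)
    also have "\<dots> = (\<Sum>i<M. \<bar>f (unit_vec i)\<bar>) - (\<Sum>i<N. \<bar>f (unit_vec i)\<bar>)"
      unfolding split(1) by (simp add: sum.union_disjoint split(2))
    also have "\<dots> \<le> dual_tail f N"
      unfolding dual_tail_def using sum_le_suminf[OF summable_abs_dual_unit_vec[OF f], of "{..<M}"] by simp
    finally show "\<bar>f (trunc M x) - (\<Sum>i<N. x i * f (unit_vec i))\<bar> \<le> dual_tail f N" .
  qed
qed

lemma bidual_add: "\<Phi> \<in> BD \<Longrightarrow> f \<in> D \<Longrightarrow> g \<in> D \<Longrightarrow> \<Phi> (\<lambda>x. f x + g x) = \<Phi> f + \<Phi> g"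
  unfolding read_bidual_def by blast

lemma bidual_scale: "\<Phi> \<in> BD \<Longrightarrow> f \<in> D \<Longrightarrow> \<Phi> (\<lambda>x. c * f x) = c * \<Phi> f"
  unfolding read_bidual_def by blast

lemma bidual_lincomb:
  "\<Phi> \<in> BD \<Longrightarrow> f \<in> D \<Longrightarrow> g \<in> D \<Longrightarrow> \<Phi> (\<lambda>x. f x + c * g x) = \<Phi> f + c * \<Phi> g"
  using bidual_add[OF _ _ scale_in_dual, of \<Phi> f g c] bidual_scale[of \<Phi> g c] by simp

lemma bidual_zero: "\<Phi> \<in> BD \<Longrightarrow> \<Phi> (\<lambda>x. 0) = 0"
  using bidual_scale[OF _ zero_in_dual, of \<Phi> 0] by simp

lemma bidual_bounded:
  assumes "\<Phi> \<in> BD"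
  obtains C where "C \<ge> 0" "\<And>f. f \<in> D \<Longrightarrow> \<bar>\<Phi> f\<bar> \<le> C * DN f"
proof -
  obtain C where C: "\<forall>f\<in>D. \<bar>\<Phi> f\<bar> \<le> C * DN f"
    using assms unfolding read_bidual_def by blast
  have "\<bar>\<Phi> f\<bar> \<le> max C 0 * DN f" if "f \<in> D" for f
  proof -
    have "C * DN f \<le> max C 0 * DN f" using dual_norm_nonneg[OF that] by (simp add: mult_right_mono)
    then show ?thesis using C that by fastforce
  qed
  then show ?thesis using that[of "max C 0"] by simp
qed

lemma bdd_above_bidual: "\<Phi> \<in> BD \<Longrightarrow> bdd_above ((\<lambda>f. \<bar>\<Phi> f\<bar>) ` {f\<in>D. DN f \<le> 1})"
  by (erule bidual_bounded, rule bdd_aboveI2) (auto intro: order_trans mult_left_le)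

lemma abs_le_bidual_norm: "\<Phi> \<in> BD \<Longrightarrow> f \<in> D \<Longrightarrow> DN f \<le> 1 \<Longrightarrow> \<bar>\<Phi> f\<bar> \<le> BN \<Phi>"
  unfolding bidual_norm_def by (rule cSUP_upper[OF _ bdd_above_bidual]) auto

lemma dual_norm_zero_le: "DN (\<lambda>x. 0) \<le> 1"
  by (rule dual_norm_le) simp

lemma dual_unit_ball_nonempty: "{f\<in>D. DN f \<le> 1} \<noteq> {}"
  using zero_in_dual dual_norm_zero_le by auto

lemma bidual_norm_le:
  "(\<And>f. f \<in> D \<Longrightarrow> DN f \<le> 1 \<Longrightarrow> \<bar>\<Phi> f\<bar> \<le> K) \<Longrightarrow> BN \<Phi> \<le> K"
  unfolding bidual_norm_def by (rule cSUP_least[OF dual_unit_ball_nonempty]) auto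

definition coords :: "(((nat \<Rightarrow> real) \<Rightarrow> real) \<Rightarrow> real) \<Rightarrow> nat \<Rightarrow> real" where
  "coords \<Phi> = (\<lambda>i. \<Phi> (delta i))"

definition dual_partial :: "((nat \<Rightarrow> real) \<Rightarrow> real) \<Rightarrow> nat \<Rightarrow> (nat \<Rightarrow> real) \<Rightarrow> real" where
  "dual_partial f N = (\<lambda>x. if x \<in> c0seq then (\<Sum>i<N. x i * f (unit_vec i)) else 0)"

lemma dual_partial_Suc:
  "dual_partial f (Suc N) = (\<lambda>x. dual_partial f N x + f (unit_vec N) * delta N x)"
  unfolding dual_partial_def delta_def by (auto simp: algebra_simps)

lemma dual_partial_in_dual: "dual_partial f N \<in> D"
proof (induction N)
  case 0
  have "dual_partial f 0 = (\<lambda>x. 0)" unfolding dual_partial_def by auto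
  then show ?case using zero_in_dual by simp
next
  case (Suc N)
  then show ?case unfolding dual_partial_Suc by (rule dual_lincomb[OF _ delta_in_dual])
qed

lemma bidual_dual_partial:
  assumes "\<Phi> \<in> BD"
  shows "\<Phi> (dual_partial f N) = (\<Sum>i<N. coords \<Phi> i * f (unit_vec i))"
proof (induction N)
  case 0
  have "dual_partial f 0 = (\<lambda>x. 0)" unfolding dual_partial_def by auto
  then show ?case using bidual_zero[OF assms] by simp
next
  case (Suc N)
  then show ?case
    unfolding dual_partial_Suc bidual_lincomb[OF assms dual_partial_in_dual delta_in_dual]
    by (simp add: coords_def)
qed

text \<open>
  \<Phi> (dual_partial f N) = f (trunc N (coords \<Phi>)), and f - dual_partial f N has dual norm at
  most the tail of the absolutely summable sequence f (unit_vec i).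
\<close>

lemma bidual_tendsto:
  assumes \<Phi>: "\<Phi> \<in> BD" and f: "f \<in> D"
  shows "(\<lambda>N. f (trunc N (coords \<Phi>))) \<longlonglongrightarrow> \<Phi> f"
proof -
  obtain C where C: "C \<ge> 0" "\<And>f. f \<in> D \<Longrightarrow> \<bar>\<Phi> f\<bar> \<le> C * DN f"
    using bidual_bounded[OF \<Phi>] by blast
  have "\<bar>\<Phi> f - \<Phi> (dual_partial f N)\<bar> \<le> C * dual_tail f N" for N
  proof -
    define g where "g = (\<lambda>x. f x + (-1) * dual_partial f N x)"
    have g: "g \<in> D" unfolding g_def by (rule dual_lincomb[OF f dual_partial_in_dual])
    have "DN g \<le> dual_tail f N"
    proof (rule dual_norm_le)
      fix x assume x: "x \<in> c0seq" and "RN x \<le> 1"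
      then have "\<forall>i. \<bar>x i\<bar> \<le> 1" using abs_le_read_norm_c0 order_trans by blast
      then show "\<bar>g x\<bar> \<le> dual_tail f N"
        unfolding g_def dual_partial_def using abs_dual_sub_partial_le[OF f x] x by simp
    qed
    moreover have "\<Phi> g = \<Phi> f - \<Phi> (dual_partial f N)"
      unfolding g_def bidual_lincomb[OF \<Phi> f dual_partial_in_dual] by simp
    ultimately show ?thesis using C(2)[OF g] mult_left_mono[OF _ C(1)] by fastforce
  qed
  then have "(\<lambda>N. \<Phi> f - \<Phi> (dual_partial f N)) \<longlonglongrightarrow> 0"
    by (intro Lim_null_comparison[OF _ tendsto_mult_right_zero[OF dual_tail_tendsto_0[OF f],
          where c=C]]) simp
  then have "(\<lambda>N. \<Phi> f - (\<Phi> f - \<Phi> (dual_partial f N))) \<longlonglongrightarrow> \<Phi> f - 0"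
    by (intro tendsto_diff tendsto_const)
  moreover have "\<Phi> (dual_partial f N) = f (trunc N (coords \<Phi>))" for N
    using bidual_dual_partial[OF \<Phi>] dual_trunc[OF f] by simp
  ultimately show ?thesis by simp
qed

lemma bidual_eq_scale_of_coords:
  assumes \<Phi>: "\<Phi> \<in> BD" and \<Psi>: "\<Psi> \<in> BD" and coords_eq: "\<And>i. coords \<Psi> i = c * coords \<Phi> i"
    and f: "f \<in> D"
  shows "\<Psi> f = c * \<Phi> f"
proof -
  have "trunc N (coords \<Psi>) = (\<lambda>i. c * trunc N (coords \<Phi>) i)" for N
    unfolding trunc_def coords_eq by auto
  then have "(\<lambda>N. f (trunc N (coords \<Psi>))) \<longlonglongrightarrow> c * \<Phi> f"
    using tendsto_mult_left[OF bidual_tendsto[OF \<Phi> f]] dual_scale[OF f c0seq_trunc] by simp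
  then show ?thesis using LIMSEQ_unique bidual_tendsto[OF \<Psi> f] by blast
qed

lemma bidual_norm_nonneg: "\<Phi> \<in> BD \<Longrightarrow> 0 \<le> BN \<Phi>"
  using abs_le_bidual_norm[OF _ zero_in_dual dual_norm_zero_le] bidual_zero by fastforce

lemma bidual_norm_scale:
  assumes \<Phi>: "\<Phi> \<in> BD" and \<Psi>: "\<Psi> \<in> BD" and c: "c \<ge> 0" and eq: "\<And>f. f \<in> D \<Longrightarrow> \<Psi> f = c * \<Phi> f"
  shows "BN \<Psi> = c * BN \<Phi>"
proof (rule antisym)
  show "BN \<Psi> \<le> c * BN \<Phi>"
    by (rule bidual_norm_le) (simp add: eq abs_mult c mult_left_mono abs_le_bidual_norm[OF \<Phi>])
  show "c * BN \<Phi> \<le> BN \<Psi>"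
  proof (cases "c = 0")
    case True
    then show ?thesis using bidual_norm_nonneg[OF \<Psi>] by simp
  next
    case False
    then have "c > 0" using c by simp
    have "BN \<Phi> \<le> BN \<Psi> / c"
      by (rule bidual_norm_le) (use abs_le_bidual_norm[OF \<Psi>] \<open>c > 0\<close> in \<open>auto simp: eq abs_mult field_simps\<close>)
    then show ?thesis using \<open>c > 0\<close> by (simp add: field_simps)
  qed
qed

lemma abs_coords_le: "\<Phi> \<in> BD \<Longrightarrow> \<bar>coords \<Phi> i\<bar> \<le> BN \<Phi>"
  unfolding coords_def by (rule abs_le_bidual_norm[OF _ delta_in_dual dual_norm_delta_le])

lemma coords_nonzero:
  assumes \<Phi>: "\<Phi> \<in> BD" and "BN \<Phi> \<noteq> 0"
  shows "\<exists>i. coords \<Phi> i \<noteq> 0"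
proof (rule ccontr)
  assume "\<not> (\<exists>i. coords \<Phi> i \<noteq> 0)"
  then have "\<Phi> f = 0 * \<Phi> f" if "f \<in> D" for f
    using bidual_eq_scale_of_coords[OF \<Phi> \<Phi> _ that, of 0] by simp
  then have "BN \<Phi> = 0 * BN \<Phi>" by (rule bidual_norm_scale[OF \<Phi> \<Phi> order_refl])
  with assms(2) show False by simp
qed

lemma coords_not_nonneg_proportional:
  assumes X: "X \<in> BD" and Y: "Y \<in> BD" and norms: "BN X = BN Y" "BN X \<noteq> 0"
    and XY: "\<exists>f\<in>D. X f \<noteq> Y f"
  shows "\<not> (\<exists>c\<ge>0. \<forall>i. coords Y i = c * coords X i)"
proof
  assume "\<exists>c\<ge>0. \<forall>i. coords Y i = c * coords X i"
  then obtain c where c: "c \<ge> 0" "\<And>i. coords Y i = c * coords X i" by blast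
  then have YX: "Y f = c * X f" if "f \<in> D" for f
    using bidual_eq_scale_of_coords[OF X Y c(2) that] by simp
  then have "BN Y = c * BN X" by (rule bidual_norm_scale[OF X Y c(1)])
  then have "c = 1" using norms by simp
  with XY YX show False by auto
qed

definition weighted_pairing :: "(nat \<Rightarrow> real) \<Rightarrow> (nat \<Rightarrow> real) \<Rightarrow> real" where
  "weighted_pairing \<sigma> x = (\<Sum>n. w n * \<sigma> n * seq_inner x (v n))"

lemma abs_weighted_term_le:
  "\<bar>\<sigma> n\<bar> \<le> 1 \<Longrightarrow> \<bar>w n * \<sigma> n * seq_inner x (v n)\<bar> \<le> w n * \<bar>seq_inner x (v n)\<bar>"
  using w_pos[of n] by (simp add: abs_mult mult_left_le_one_le mult.assoc)

lemma summable_weighted_pairing: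
  assumes "\<forall>i. \<bar>x i\<bar> \<le> B" "\<And>n. \<bar>\<sigma> n\<bar> \<le> 1"
  shows "summable (\<lambda>n. w n * \<sigma> n * seq_inner x (v n))"
  by (rule summable_comparison_test'[OF summable_weighted_abs_inner[OF assms(1)], where N=0])
    (simp add: abs_weighted_term_le assms(2))

lemma abs_weighted_pairing_le:
  assumes "\<forall>i. \<bar>x i\<bar> \<le> B" "\<And>n. \<bar>\<sigma> n\<bar> \<le> 1"
  shows "\<bar>weighted_pairing \<sigma> x\<bar> \<le> (\<Sum>n. w n * \<bar>seq_inner x (v n)\<bar>)"
proof -
  have "norm (\<Sum>n. w n * \<sigma> n * seq_inner x (v n)) \<le> (\<Sum>n. w n * \<bar>seq_inner x (v n)\<bar>)"
    by (rule norm_suminf_le[OF _ summable_weighted_abs_inner[OF assms(1)]])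
      (simp add: abs_weighted_term_le assms(2))
  then show ?thesis unfolding weighted_pairing_def by simp
qed

lemma weighted_pairing_add:
  assumes "\<forall>i. \<bar>x i\<bar> \<le> B1" "\<forall>i. \<bar>y i\<bar> \<le> B2" "\<And>n. \<bar>\<sigma> n\<bar> \<le> 1"
  shows "weighted_pairing \<sigma> (\<lambda>i. x i + y i) = weighted_pairing \<sigma> x + weighted_pairing \<sigma> y"
proof -
  have "weighted_pairing \<sigma> (\<lambda>i. x i + y i)
      = (\<Sum>n. w n * \<sigma> n * seq_inner x (v n) + w n * \<sigma> n * seq_inner y (v n))"
    unfolding weighted_pairing_def seq_inner_v_add by (simp add: distrib_left)
  also have "\<dots> = weighted_pairing \<sigma> x + weighted_pairing \<sigma> y"
    unfolding weighted_pairing_def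
    by (rule suminf_add[OF summable_weighted_pairing[of x B1 \<sigma>]
          summable_weighted_pairing[of y B2 \<sigma>], symmetric]) (use assms in auto)
  finally show ?thesis .
qed

lemma weighted_pairing_scale:
  assumes "\<forall>i. \<bar>x i\<bar> \<le> B" "\<And>n. \<bar>\<sigma> n\<bar> \<le> 1"
  shows "weighted_pairing \<sigma> (\<lambda>i. c * x i) = c * weighted_pairing \<sigma> x"
proof -
  have "weighted_pairing \<sigma> (\<lambda>i. c * x i) = (\<Sum>n. c * (w n * \<sigma> n * seq_inner x (v n)))"
    unfolding weighted_pairing_def seq_inner_v_scale by (simp add: ac_simps)
  also have "\<dots> = c * weighted_pairing \<sigma> x"
    unfolding weighted_pairing_def by (rule suminf_mult[OF summable_weighted_pairing[of x B \<sigma>, OF assms]])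
  finally show ?thesis .
qed

text \<open>Only the terms with \<open>a n \<ge> N\<close> see the coordinates beyond N, and their weights sum to \<open>O(2^-N)\<close>.\<close>

lemma weighted_pairing_diff_le:
  assumes x: "\<forall>i. \<bar>x i\<bar> \<le> 1" and y: "\<forall>i. \<bar>y i\<bar> \<le> 1" and agree: "\<And>i. i < N \<Longrightarrow> x i = y i"
    and \<sigma>: "\<And>n. \<bar>\<sigma> n\<bar> \<le> 1"
  shows "\<bar>weighted_pairing \<sigma> x - weighted_pairing \<sigma> y\<bar> \<le> 8 * (1/2) ^ N"
proof -
  let ?d = "\<lambda>n. w n * \<sigma> n * seq_inner x (v n) - w n * \<sigma> n * seq_inner y (v n)"
  have term_le: "norm (?d n) \<le> 4 * (1/2) ^ (N + n)" for n
  proof (cases "a n < N")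
    case True
    then show ?thesis using seq_inner_v_cong[OF agree True] by simp
  next
    case False
    have "norm (?d n) \<le> \<bar>w n * \<sigma> n * seq_inner x (v n)\<bar> + \<bar>w n * \<sigma> n * seq_inner y (v n)\<bar>"
      unfolding real_norm_def by (rule abs_triangle_ineq4)
    also have "\<dots> \<le> w n * \<bar>seq_inner x (v n)\<bar> + w n * \<bar>seq_inner y (v n)\<bar>"
      by (intro add_mono abs_weighted_term_le \<sigma>)
    also have "\<dots> \<le> 2 * 1 * (1/2) ^ (N + n) + 2 * 1 * (1/2) ^ (N + n)"
      using False by (intro add_mono weighted_term_le x y) simp_all
    finally show ?thesis by simp
  qed
  have "weighted_pairing \<sigma> x - weighted_pairing \<sigma> y = (\<Sum>n. ?d n)"
    unfolding weighted_pairing_def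
    by (rule suminf_diff[OF summable_weighted_pairing[of x 1 \<sigma>, OF x \<sigma>]
          summable_weighted_pairing[of y 1 \<sigma>, OF y \<sigma>]])
  moreover have "norm (\<Sum>n. ?d n) \<le> (\<Sum>n. 4 * (1/2) ^ (N + n))"
    by (rule norm_suminf_le[OF term_le sums_summable[OF geometric_tail_sums]])
  ultimately show ?thesis using sums_unique[OF geometric_tail_sums[of 4 N]] by simp
qed

definition norming_functional :: "nat \<Rightarrow> real \<Rightarrow> (nat \<Rightarrow> real) \<Rightarrow> (nat \<Rightarrow> real) \<Rightarrow> real" where
  "norming_functional k s \<sigma> = (\<lambda>x. if x \<in> c0seq then s * x k + weighted_pairing \<sigma> x else 0)"

lemma abs_norming_functional_le:
  assumes s: "\<bar>s\<bar> \<le> 1" and \<sigma>: "\<And>n. \<bar>\<sigma> n\<bar> \<le> 1" and x: "x \<in> c0seq"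
  shows "\<bar>norming_functional k s \<sigma> x\<bar> \<le> RN x"
proof -
  obtain B where B: "\<forall>i. \<bar>x i\<bar> \<le> B" using c0seq_bounded[OF x] by blast
  have "\<bar>s\<bar> * \<bar>x k\<bar> \<le> \<bar>x k\<bar>" using s by (simp add: mult_left_le_one_le)
  then have "\<bar>s * x k\<bar> \<le> sup_norm x" using abs_le_sup_norm[OF B, of k] by (simp add: abs_mult)
  with abs_weighted_pairing_le[of x B \<sigma>, OF B \<sigma>] show ?thesis
    unfolding norming_functional_def read_norm_eq using x by (simp add: abs_triangle_ineq[THEN order_trans])
qed

lemma norming_functional_in_dual:
  assumes s: "\<bar>s\<bar> \<le> 1" and \<sigma>: "\<And>n. \<bar>\<sigma> n\<bar> \<le> 1"
  shows "norming_functional k s \<sigma> \<in> D"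
proof -
  have "norming_functional k s \<sigma> (\<lambda>i. x i + y i) = norming_functional k s \<sigma> x + norming_functional k s \<sigma> y"
    if xy: "x \<in> c0seq" "y \<in> c0seq" for x y
  proof -
    obtain B1 where B1: "\<forall>i. \<bar>x i\<bar> \<le> B1" using c0seq_bounded[OF xy(1)] by blast
    obtain B2 where B2: "\<forall>i. \<bar>y i\<bar> \<le> B2" using c0seq_bounded[OF xy(2)] by blast
    from weighted_pairing_add[of x B1 y B2 \<sigma>, OF B1 B2 \<sigma>] show ?thesis
      using xy by (simp add: norming_functional_def c0seq_add algebra_simps)
  qed
  moreover have "norming_functional k s \<sigma> (\<lambda>i. c * x i) = c * norming_functional k s \<sigma> x"
    if x: "x \<in> c0seq" for x c
  proof -
    obtain B where B: "\<forall>i. \<bar>x i\<bar> \<le> B" using c0seq_bounded[OF x] by blast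
    from weighted_pairing_scale[of x B \<sigma>, OF B \<sigma>] show ?thesis
      using x by (simp add: norming_functional_def c0seq_scale algebra_simps)
  qed
  moreover have "\<forall>x\<in>c0seq. \<bar>norming_functional k s \<sigma> x\<bar> \<le> 1 * RN x"
    using abs_norming_functional_le[of s \<sigma>, OF s \<sigma>] by simp
  moreover have "\<forall>x. x \<notin> c0seq \<longrightarrow> norming_functional k s \<sigma> x = 0"
    by (simp add: norming_functional_def)
  ultimately show ?thesis
    unfolding read_dual_def mem_Collect_eq by blast
qed

lemma norming_functional_eq_read_norm:
  assumes x: "x \<in> c0seq" and max: "\<And>i. \<bar>x i\<bar> \<le> \<bar>x k\<bar>"
  shows "norming_functional k (sgn (x k)) (\<lambda>n. sgn (seq_inner x (v n))) x = RN x"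
proof -
  have "sup_norm x = \<bar>x k\<bar>"
    using sup_norm_le[of x "\<bar>x k\<bar>"] abs_le_sup_norm[of x "\<bar>x k\<bar>" k] max by (simp add: antisym)
  moreover have "weighted_pairing (\<lambda>n. sgn (seq_inner x (v n))) x = (\<Sum>n. w n * \<bar>seq_inner x (v n)\<bar>)"
    unfolding weighted_pairing_def by (simp add: abs_sgn ac_simps)
  ultimately show ?thesis
    unfolding norming_functional_def read_norm_eq using x by (simp add: abs_sgn)
qed

lemma dual_norm_norming_functional_le:
  assumes "\<bar>s\<bar> \<le> 1" "\<And>n. \<bar>\<sigma> n\<bar> \<le> 1"
  shows "DN (norming_functional k s \<sigma>) \<le> 1"
proof (rule dual_norm_le)
  fix x assume "x \<in> c0seq" "RN x \<le> 1"
  then show "\<bar>norming_functional k s \<sigma> x\<bar> \<le> 1"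
    using abs_norming_functional_le[of s \<sigma> x k, OF assms \<open>x \<in> c0seq\<close>] by linarith
qed

lemma abs_trunc_coords_le: "\<Phi> \<in> BD \<Longrightarrow> BN \<Phi> \<le> 1 \<Longrightarrow> \<forall>i. \<bar>trunc N (coords \<Phi>) i\<bar> \<le> 1"
  using abs_coords_le[of \<Phi>] unfolding trunc_def by (auto intro: order_trans)

lemma read_norm_trunc_coords_le:
  assumes \<Phi>: "\<Phi> \<in> BD" "BN \<Phi> \<le> 1" and N: "N \<ge> 1"
  shows "RN (trunc N (coords \<Phi>)) \<le> 1 + 8 * (1/2) ^ N"
proof -
  let ?\<xi> = "coords \<Phi>"
  define z where "z = trunc N ?\<xi>"
  obtain k where k: "k < N" "\<And>i. i < N \<Longrightarrow> \<bar>?\<xi> i\<bar> \<le> \<bar>?\<xi> k\<bar>"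
  proof -
    have fin: "finite ((\<lambda>i. \<bar>?\<xi> i\<bar>) ` {..<N})" "(\<lambda>i. \<bar>?\<xi> i\<bar>) ` {..<N} \<noteq> {}"
      using N by (auto simp: lessThan_empty_iff)
    obtain k where "k < N" "\<bar>?\<xi> k\<bar> = Max ((\<lambda>i. \<bar>?\<xi> i\<bar>) ` {..<N})"
      using Max_in[OF fin] by auto
    then show ?thesis using that Max_ge[OF fin(1)] by auto
  qed
  have z_max: "\<bar>z i\<bar> \<le> \<bar>z k\<bar>" for i using k unfolding z_def trunc_def by auto
  define \<sigma> where "\<sigma> = (\<lambda>n. sgn (seq_inner z (v n)))"
  define g where "g = norming_functional k (sgn (z k)) \<sigma>"
  have sgn_le: "\<bar>sgn t\<bar> \<le> 1" for t :: real by (simp add: abs_sgn_eq)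
  have \<sigma>_le: "\<bar>\<sigma> n\<bar> \<le> 1" for n unfolding \<sigma>_def by (rule sgn_le)
  have g: "g \<in> D" "DN g \<le> 1" unfolding g_def
    using norming_functional_in_dual[of "sgn (z k)" \<sigma>, OF sgn_le \<sigma>_le]
      dual_norm_norming_functional_le[of "sgn (z k)" \<sigma>, OF sgn_le \<sigma>_le] by simp_all
  have "RN z = g z"
    unfolding g_def \<sigma>_def z_def
    by (rule norming_functional_eq_read_norm[OF c0seq_trunc z_max[unfolded z_def], symmetric])
  also have "g z - 8 * (1/2) ^ N \<le> \<Phi> g"
  proof (rule LIMSEQ_le_const[OF bidual_tendsto[OF \<Phi>(1) g(1)]], intro exI allI impI)
    fix M assume "N \<le> M"
    then have agree: "z i = trunc M ?\<xi> i" if "i < N" for i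
      using that unfolding z_def trunc_def by simp
    have "g z - g (trunc M ?\<xi>) = weighted_pairing \<sigma> z - weighted_pairing \<sigma> (trunc M ?\<xi>)"
      unfolding g_def norming_functional_def
      using agree[OF k(1)] c0seq_trunc[of N ?\<xi>, folded z_def] c0seq_trunc[of M ?\<xi>] by simp
    also have "\<dots> \<le> 8 * (1/2) ^ N"
      using weighted_pairing_diff_le[of z "trunc M ?\<xi>" N \<sigma>, OF _ _ agree \<sigma>_le]
        abs_trunc_coords_le[OF \<Phi>] unfolding z_def by (simp add: abs_le_iff)
    finally show "g z - 8 * (1/2) ^ N \<le> g (trunc M ?\<xi>)" by simp
  qed
  moreover have "\<Phi> g \<le> 1" using abs_le_bidual_norm[OF \<Phi>(1) g] \<Phi>(2) by simp
  ultimately show ?thesis unfolding z_def by simp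
qed

lemma read_norm_trunc_add_coords_le:
  assumes X: "X \<in> BD" "BN X \<le> 1" and Y: "Y \<in> BD" "BN Y \<le> 1"
    and pos: "seq_inner (coords X) (v n) > 0" and neg: "seq_inner (coords Y) (v n) < 0"
    and N: "a n < N"
  shows "RN (trunc N (\<lambda>i. coords X i + coords Y i)) \<le> 2 + 16 * (1/2) ^ N
    - 2 * w n * min (seq_inner (coords X) (v n)) (- seq_inner (coords Y) (v n))"
proof -
  let ?x = "trunc N (coords X)" and ?y = "trunc N (coords Y)"
  have inner_trunc: "seq_inner (trunc N \<xi>) (v n) = seq_inner \<xi> (v n)" for \<xi>
    by (rule seq_inner_v_cong[OF _ N]) (simp add: trunc_def)
  have "trunc N (\<lambda>i. coords X i + coords Y i) = (\<lambda>i. ?x i + ?y i)"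
    by (auto simp: trunc_def)
  then have "RN (trunc N (\<lambda>i. coords X i + coords Y i))
      \<le> RN ?x + RN ?y - 2 * w n * min (seq_inner (coords X) (v n)) (- seq_inner (coords Y) (v n))"
    using read_norm_add_le_gap[OF abs_trunc_coords_le[OF X, of N] abs_trunc_coords_le[OF Y, of N], of n]
      pos neg unfolding inner_trunc by simp
  moreover have "N \<ge> 1" using N by simp
  ultimately show ?thesis
    using read_norm_trunc_coords_le[OF X, of N] read_norm_trunc_coords_le[OF Y, of N] by linarith
qed

lemma bidual_norm_add_le:
  assumes X: "X \<in> BD" "BN X \<le> 1" and Y: "Y \<in> BD" "BN Y \<le> 1"
    and pos: "seq_inner (coords X) (v n) > 0" and neg: "seq_inner (coords Y) (v n) < 0"
  shows "BN (\<lambda>f. X f + Y f)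
    \<le> 2 - 2 * w n * min (seq_inner (coords X) (v n)) (- seq_inner (coords Y) (v n))"
    (is "_ \<le> 2 - ?E")
proof (rule bidual_norm_le)
  fix f assume f: "f \<in> D" "DN f \<le> 1"
  have bound: "\<bar>f (trunc N (coords X)) + f (trunc N (coords Y))\<bar> \<le> 2 + 16 * (1/2) ^ N - ?E"
    if "N \<ge> Suc (a n)" for N
  proof -
    let ?z = "trunc N (\<lambda>i. coords X i + coords Y i)"
    have "?z = (\<lambda>i. trunc N (coords X) i + trunc N (coords Y) i)" by (auto simp: trunc_def)
    then have "f (trunc N (coords X)) + f (trunc N (coords Y)) = f ?z"
      using dual_add[OF f(1) c0seq_trunc c0seq_trunc] by simp
    moreover have "\<bar>f ?z\<bar> \<le> DN f * RN ?z" by (rule abs_dual_le[OF f(1) c0seq_trunc])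
    moreover have "DN f * RN ?z \<le> 1 * RN ?z"
      using f(2) read_norm_nonneg_c0[OF c0seq_trunc] by (rule mult_right_mono)
    ultimately show ?thesis
      using read_norm_trunc_add_coords_le[OF X Y pos neg, of N] that by simp
  qed
  have "(\<lambda>N. \<bar>f (trunc N (coords X)) + f (trunc N (coords Y))\<bar>) \<longlonglongrightarrow> \<bar>X f + Y f\<bar>"
    by (intro tendsto_rabs tendsto_add bidual_tendsto X(1) Y(1) f(1))
  moreover have "(\<lambda>N. 2 + 16 * (1/2::real) ^ N - ?E) \<longlonglongrightarrow> 2 + 16 * 0 - ?E"
    by (intro tendsto_diff tendsto_add tendsto_mult tendsto_const LIMSEQ_power_zero) simp
  ultimately have "\<bar>X f + Y f\<bar> \<le> 2 + 16 * 0 - ?E"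
    by (rule LIMSEQ_le) (use bound in blast)
  then show "\<bar>X f + Y f\<bar> \<le> 2 - ?E" by simp
qed

end

theorem theorem2p4:
  fixes u :: "nat \<Rightarrow> nat \<Rightarrow> real" and a :: "nat \<Rightarrow> nat"
  assumes u_c00: "\<And>n. u n \<in> c00Q"
    and u_enum: "\<And>v. v \<in> c00Q \<Longrightarrow> infinite {n. u n = v}"
    and a_mono: "strict_mono a"
    and a_pos: "\<And>n. a n > 0"
    and a_supp: "\<And>n i. u n i \<noteq> 0 \<Longrightarrow> i < a n"
    and a_l1: "\<And>n. l1_norm (u n) < real (a n)"
    and X: "X \<in> read_bidual u a" and Y: "Y \<in> read_bidual u a"
    and X1: "bidual_norm u a X = 1" and Y1: "bidual_norm u a Y = 1"
    and XY: "\<exists>f\<in>read_dual u a. X f \<noteq> Y f"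
  shows "bidual_norm u a (\<lambda>f. X f + Y f) < 2"
proof -
  interpret read_space u a by unfold_locales (use assms in auto)
  have not_prop: "\<not> (\<exists>c\<ge>0. \<forall>i. coords Y i = c * coords X i)"
    using coords_not_nonneg_proportional[OF X Y] X1 Y1 XY by simp
  have "\<exists>i. coords X i \<noteq> 0" using coords_nonzero[OF X] X1 by simp
  then obtain y where y: "y \<in> c00Q" "seq_inner (coords X) y > 1" "seq_inner (coords Y) y < -1"
    using exists_c00Q_separating[OF _ not_prop] by blast
  have "{n. u n = y} \<noteq> {}" using u_enum[OF y(1)] by force
  then obtain n where n: "u n = y" by blast
  have "\<bar>coords X (a n)\<bar> \<le> 1" "\<bar>coords Y (a n)\<bar> \<le> 1"
    using abs_coords_le[OF X, of "a n"] abs_coords_le[OF Y, of "a n"] X1 Y1 by simp_all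
  then have pos: "seq_inner (coords X) (v n) > 0" and neg: "seq_inner (coords Y) (v n) < 0"
    using y(2,3) unfolding seq_inner_v n by linarith+
  have "bidual_norm u a (\<lambda>f. X f + Y f)
      \<le> 2 - 2 * w n * min (seq_inner (coords X) (v n)) (- seq_inner (coords Y) (v n))"
    using bidual_norm_add_le[OF X _ Y _ pos neg] X1 Y1 by simp
  moreover have "2 * w n * min (seq_inner (coords X) (v n)) (- seq_inner (coords Y) (v n)) > 0"
    using w_pos[of n] pos neg by simp
  ultimately show ?thesis by linarith
qed

end
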